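(* Let $R$ be a unital associative ring and $$A=\begin{pmatrix}1&1&1\\1&a&b\\1&c&d\end{pmatrix}\in\widehat{\cal S},\qquad \Phi^2(A)=\begin{pmatrix}1&1&1\\1&a''&b''\\1&c''&d''\end{pmatrix}.$$ Then $$a''=\zeta^{-1}(d-c)^{-1}(db^{-1}-ca^{-1})(db^{-1}-1)^{-1}(d-1)\zeta,\qquad \zeta=(d-c)^{-1}(c-1)-(b-a)^{-1}(a-1).$$
   Context: $R^*$: units of $R$. $M_3^*(R)$: invertible $3\times3$ matrices; $M_3^\star(R)$: matrices with all entries in $R^*$. $J_1(M)=M^{-1}$; $J_2(M)_{jk}=(M_{kj})^{-1}$; $J=J_2\circ J_1$. $\widehat M_3(R)$: matrices whose first row and column consist of $1$'s. For $A=\{a_{j,k}\}\in M_3^\star(R)$: $\Lambda^L(A)_{j,k}=a_{1,1}a_{j,1}^{-1}a_{j,k}a_{1,k}^{-1}$. $\Phi(A)=J_2(\Lambda^L(A^{-1}))$, $\Phi^2=\Phi\circ\Phi$. ${\cal S}=\{M\in M_3(R):$ all square submatrices of $M$ are invertible and $J_2(M)$ is invertible$\}$, $\widehat{\cal S}={\cal S}\cap\widehat M_3(R)$. *)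

theory Defs
  imports Main
begin

text \<open>Matrices are functions nat => nat => 'a; a 3x3 matrix uses indices 0,1,2
  (0-based; paper index j corresponds to j-1 here).\<close>

definition is_unit :: "'a::ring_1 \<Rightarrow> bool" where
  "is_unit x \<longleftrightarrow> (\<exists>y. x * y = 1 \<and> y * x = 1)"

definition rinv :: "'a::ring_1 \<Rightarrow> 'a" where
  "rinv x = (if is_unit x then (THE y. x * y = 1 \<and> y * x = 1) else 0)"

definition mmult :: "nat \<Rightarrow> (nat \<Rightarrow> nat \<Rightarrow> 'a::ring_1) \<Rightarrow> (nat \<Rightarrow> nat \<Rightarrow> 'a) \<Rightarrow> nat \<Rightarrow> nat \<Rightarrow> 'a" where
  "mmult n M N = (\<lambda>i j. \<Sum>k<n. M i k * N k j)"

definition is_minv :: "nat \<Rightarrow> (nat \<Rightarrow> nat \<Rightarrow> 'a::ring_1) \<Rightarrow> (nat \<Rightarrow> nat \<Rightarrow> 'a) \<Rightarrow> bool" where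
  "is_minv n M N \<longleftrightarrow> (\<forall>i<n. \<forall>j<n. mmult n M N i j = (if i = j then 1 else 0)
                                   \<and> mmult n N M i j = (if i = j then 1 else 0))"

definition minvertible :: "nat \<Rightarrow> (nat \<Rightarrow> nat \<Rightarrow> 'a::ring_1) \<Rightarrow> bool" where
  "minvertible n M \<longleftrightarrow> (\<exists>N. is_minv n M N)"

text \<open>The inverse matrix (its entries with indices < n are uniquely determined).\<close>
definition minv :: "nat \<Rightarrow> (nat \<Rightarrow> nat \<Rightarrow> 'a::ring_1) \<Rightarrow> nat \<Rightarrow> nat \<Rightarrow> 'a" where
  "minv n M = (SOME N. is_minv n M N)"

definition J2 :: "(nat \<Rightarrow> nat \<Rightarrow> 'a::ring_1) \<Rightarrow> nat \<Rightarrow> nat \<Rightarrow> 'a" where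
  "J2 M = (\<lambda>j k. rinv (M k j))"

definition LamL :: "(nat \<Rightarrow> nat \<Rightarrow> 'a::ring_1) \<Rightarrow> nat \<Rightarrow> nat \<Rightarrow> 'a" where
  "LamL A = (\<lambda>j k. A 0 0 * rinv (A j 0) * A j k * rinv (A 0 k))"

definition Phi :: "(nat \<Rightarrow> nat \<Rightarrow> 'a::ring_1) \<Rightarrow> nat \<Rightarrow> nat \<Rightarrow> 'a" where
  "Phi A = J2 (LamL (minv 3 A))"

definition submat :: "(nat \<Rightarrow> nat \<Rightarrow> 'a) \<Rightarrow> nat list \<Rightarrow> nat list \<Rightarrow> nat \<Rightarrow> nat \<Rightarrow> 'a" where
  "submat M rs cs = (\<lambda>i j. M (rs ! i) (cs ! j))"

definition S3 :: "(nat \<Rightarrow> nat \<Rightarrow> 'a::ring_1) set" where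
  "S3 = {M. (\<forall>rs cs. sorted_wrt (<) rs \<and> sorted_wrt (<) cs \<and> length rs = length cs
                    \<and> rs \<noteq> [] \<and> set rs \<subseteq> {..<3} \<and> set cs \<subseteq> {..<3}
                    \<longrightarrow> minvertible (length rs) (submat M rs cs))
            \<and> minvertible 3 (J2 M)}"

definition Mhat3 :: "(nat \<Rightarrow> nat \<Rightarrow> 'a::ring_1) set" where
  "Mhat3 = {M. \<forall>i<3. M 0 i = 1 \<and> M i 0 = 1}"

definition Shat3 :: "(nat \<Rightarrow> nat \<Rightarrow> 'a::ring_1) set" where
  "Shat3 = S3 \<inter> Mhat3"

end

theory Submission
  imports Defs
begin

(*
  Write N for the inverse of the hat matrix A.  Since J2 transposes, the entries of
  Phi(A) = J2(Lambda^L(N)) are N_0j N_kj^-1 N_k0 N_00^-1, and the quasideterminant identities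
  for the inverse of a hat matrix turn them into 1 - (x - 1)^-1 x N_00^-1, where x is the entry
  of A in the complementary position.  So Phi(A) is again a hat matrix, and applying the same
  identities to it expresses Phi^2(A)_11 through the Schur complement of Phi(A), which is
  invertible because J2(A) is.  The first row of N gives zeta N_00 = (d - c)^-1 c - (b - a)^-1 a,
  which eliminates N_00 and leaves an identity between expressions in a, b, c, d alone.
*)

section \<open>Units of a noncommutative ring\<close>

lemma is_unitI: "x * y = 1 \<Longrightarrow> y * x = 1 \<Longrightarrow> is_unit x"
  unfolding is_unit_def by blast

lemma rinv_eqI:
  fixes x y :: "'a::ring_1"
  assumes "x * y = 1" "y * x = 1"
  shows "rinv x = y"
proof -
  have "(THE y. x * y = 1 \<and> y * x = 1) = y"
  proof (rule the_equality)
    fix z assume z: "x * z = 1 \<and> z * x = 1"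
    have "z = (z * x) * y" using assms(1) by (simp add: mult.assoc)
    then show "z = y" using z by simp
  qed (use assms in simp)
  then show ?thesis using is_unitI[OF assms] unfolding rinv_def by simp
qed

lemma
  fixes x :: "'a::ring_1"
  assumes "is_unit x"
  shows right_rinv: "x * rinv x = 1" and left_rinv: "rinv x * x = 1"
proof -
  obtain y where "x * y = 1" "y * x = 1" using assms unfolding is_unit_def by blast
  moreover from this have "rinv x = y" by (rule rinv_eqI)
  ultimately show "x * rinv x = 1" "rinv x * x = 1" by simp_all
qed

lemma
  fixes x :: "'a::ring_1"
  assumes "is_unit x"
  shows right_rinv_cancel: "x * (rinv x * z) = z" and left_rinv_cancel: "rinv x * (x * z) = z"
  using right_rinv[OF assms] left_rinv[OF assms] by (simp_all add: mult.assoc[symmetric])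

lemma
  fixes x y :: "'a::ring_1"
  assumes "is_unit x" "is_unit y"
  shows is_unit_mult: "is_unit (x * y)" and rinv_mult: "rinv (x * y) = rinv y * rinv x"
proof -
  have "(x * y) * (rinv y * rinv x) = 1" "(rinv y * rinv x) * (x * y) = 1"
    using assms by (simp_all add: mult.assoc right_rinv_cancel left_rinv_cancel right_rinv left_rinv)
  then show "is_unit (x * y)" "rinv (x * y) = rinv y * rinv x"
    by (simp_all add: is_unitI rinv_eqI)
qed

lemma
  fixes x :: "'a::ring_1"
  assumes "is_unit x"
  shows is_unit_rinv: "is_unit (rinv x)" and rinv_rinv: "rinv (rinv x) = x"
  using right_rinv[OF assms] left_rinv[OF assms] is_unitI rinv_eqI by blast+

lemma
  fixes x :: "'a::ring_1"
  assumes "is_unit x"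
  shows is_unit_uminus: "is_unit (- x)" and rinv_uminus: "rinv (- x) = - rinv x"
  using right_rinv[OF assms] left_rinv[OF assms]
    is_unitI[of "- x" "- rinv x"] rinv_eqI[of "- x" "- rinv x"] by simp_all

lemma rinv_one: "rinv (1::'a::ring_1) = 1"
  by (rule rinv_eqI) simp_all

lemma is_unit_minus_commute:
  fixes x y :: "'a::ring_1"
  shows "is_unit (x - y) \<Longrightarrow> is_unit (y - x)"
  using is_unit_uminus[of "x - y"] by simp

section \<open>Inverses of 2x2 and hat matrices\<close>

lemma mmult_1: "mmult 1 M N i j = M i 0 * N 0 j"
  by (simp add: mmult_def)

lemma mmult_2: "mmult 2 M N i j = M i 0 * N 0 j + M i 1 * N 1 j"
  by (simp add: mmult_def numeral_2_eq_2 lessThan_Suc)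

lemma mmult_3: "mmult 3 M N i j = M i 0 * N 0 j + M i 1 * N 1 j + M i 2 * N 2 j"
  by (simp add: mmult_def numeral_3_eq_3 numeral_2_eq_2 lessThan_Suc add.assoc)

lemma all_less_2: "(\<forall>i<(2::nat). P i) \<longleftrightarrow> P 0 \<and> P 1"
  by (auto simp: numeral_2_eq_2 less_Suc_eq)

lemma all_less_3: "(\<forall>i<(3::nat). P i) \<longleftrightarrow> P 0 \<and> P 1 \<and> P 2"
  by (auto simp: numeral_3_eq_3 numeral_2_eq_2 less_Suc_eq)

lemma is_minv_minv: "minvertible n M \<Longrightarrow> is_minv n M (minv n M)"
  unfolding minvertible_def minv_def by (metis someI_ex)

lemma is_minv_cong:
  assumes "\<And>i j. i < n \<Longrightarrow> j < n \<Longrightarrow> M i j = M' i j" "is_minv n M N"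
  shows "is_minv n M' N"
proof -
  have "mmult n M N i j = mmult n M' N i j" if "i < n" for i j
    unfolding mmult_def using assms(1) that by (intro sum.cong) auto
  moreover have "mmult n N M i j = mmult n N M' i j" if "j < n" for i j
    unfolding mmult_def using assms(1) that by (intro sum.cong) auto
  ultimately show ?thesis using assms(2) unfolding is_minv_def by simp
qed

lemma is_minv_reindex:
  assumes p: "bij_betw p {..<n} {..<n}" and q: "bij_betw q {..<n} {..<n}"
    and "is_minv n M N"
  shows "is_minv n (\<lambda>i j. M (p i) (q j)) (\<lambda>i j. N (q i) (p j))"
proof -
  have "mmult n (\<lambda>i j. M (p i) (q j)) (\<lambda>i j. N (q i) (p j)) i j = mmult n M N (p i) (p j)" for i j
    unfolding mmult_def using sum.reindex_bij_betw[OF q, of "\<lambda>k. M (p i) k * N k (p j)"] by simp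
  moreover have "mmult n (\<lambda>i j. N (q i) (p j)) (\<lambda>i j. M (p i) (q j)) i j = mmult n N M (q i) (q j)" for i j
    unfolding mmult_def using sum.reindex_bij_betw[OF p, of "\<lambda>k. N (q i) k * M k (q j)"] by simp
  moreover have "p i = p j \<longleftrightarrow> i = j" "q i = q j \<longleftrightarrow> i = j" if "i < n" "j < n" for i j
    using p q that unfolding bij_betw_def inj_on_def by auto
  ultimately show ?thesis
    using assms(3) bij_betwE[OF p] bij_betwE[OF q] unfolding is_minv_def by auto
qed

lemma is_minv_2_iff:
  "is_minv 2 K n \<longleftrightarrow>
     K 0 0 * n 0 0 + K 0 1 * n 1 0 = 1 \<and> K 0 0 * n 0 1 + K 0 1 * n 1 1 = 0 \<and>
     K 1 0 * n 0 0 + K 1 1 * n 1 0 = 0 \<and> K 1 0 * n 0 1 + K 1 1 * n 1 1 = 1 \<and>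
     n 0 0 * K 0 0 + n 0 1 * K 1 0 = 1 \<and> n 0 0 * K 0 1 + n 0 1 * K 1 1 = 0 \<and>
     n 1 0 * K 0 0 + n 1 1 * K 1 0 = 0 \<and> n 1 0 * K 0 1 + n 1 1 * K 1 1 = 1"
  unfolding is_minv_def all_less_2 mmult_2 by auto

lemma is_minv_2_schur:
  fixes K n :: "nat \<Rightarrow> nat \<Rightarrow> 'a::ring_1"
  assumes "is_minv 2 K n" and u: "is_unit (K 0 0)"
  shows "is_unit (K 1 1 - K 1 0 * rinv (K 0 0) * K 0 1)"
    and "rinv (K 1 1 - K 1 0 * rinv (K 0 0) * K 0 1) = n 1 1"
proof -
  have e: "K 0 0 * n 0 1 = - (K 0 1 * n 1 1)" "n 1 0 * K 0 0 = - (n 1 1 * K 1 0)"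
    "K 1 0 * n 0 1 + K 1 1 * n 1 1 = 1" "n 1 0 * K 0 1 + n 1 1 * K 1 1 = 1"
    using assms(1) unfolding is_minv_2_iff by (simp_all add: eq_neg_iff_add_eq_0)
  have "n 0 1 = rinv (K 0 0) * (K 0 0 * n 0 1)" "n 1 0 = (n 1 0 * K 0 0) * rinv (K 0 0)"
    using u by (simp_all add: left_rinv_cancel mult.assoc right_rinv)
  then have "n 0 1 = - (rinv (K 0 0) * K 0 1 * n 1 1)" "n 1 0 = - (n 1 1 * K 1 0 * rinv (K 0 0))"
    unfolding e(1,2) by (simp_all add: mult.assoc)
  then have "(K 1 1 - K 1 0 * rinv (K 0 0) * K 0 1) * n 1 1 = 1"
    "n 1 1 * (K 1 1 - K 1 0 * rinv (K 0 0) * K 0 1) = 1"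
    using e(3,4) by (simp_all add: algebra_simps)
  then show "is_unit (K 1 1 - K 1 0 * rinv (K 0 0) * K 0 1)"
    "rinv (K 1 1 - K 1 0 * rinv (K 0 0) * K 0 1) = n 1 1"
    by (simp_all add: is_unitI rinv_eqI)
qed

lemma minvertible_2_of_schur:
  fixes K :: "nat \<Rightarrow> nat \<Rightarrow> 'a::ring_1"
  assumes us: "is_unit (K 1 1)" and ut: "is_unit (K 0 0 - K 0 1 * rinv (K 1 1) * K 1 0)"
  shows "minvertible 2 K"
proof -
  define p q r s where "p = K 0 0" "q = K 0 1" "r = K 1 0" "s = K 1 1"
  define si ti where "si = rinv s" "ti = rinv (p - q * si * r)"
  have s1: "s * (si * z) = z" "si * (s * z) = z" "s * si = 1" "si * s = 1" for z
    using us by (simp_all add: p_q_r_s_def si_ti_def right_rinv_cancel left_rinv_cancel right_rinv left_rinv)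
  have t1: "(p - q * si * r) * ti = 1" "ti * (p - q * si * r) = 1"
    using ut by (simp_all add: p_q_r_s_def si_ti_def right_rinv left_rinv)
  then have pt: "p * ti = 1 + q * si * r * ti" "ti * p = 1 + ti * q * si * r"
    by (simp_all add: algebra_simps)
  have pt': "p * (ti * z) = z + q * (si * (r * (ti * z)))" "ti * (p * z) = z + ti * (q * (si * (r * z)))" for z
    using arg_cong[OF pt(1), of "\<lambda>x. x * z"] arg_cong[OF pt(2), of "\<lambda>x. x * z"]
    by (simp_all add: algebra_simps)
  define n :: "nat \<Rightarrow> nat \<Rightarrow> 'a" where "n = (\<lambda>i j. if i = 0 then (if j = 0 then ti else - (ti * q * si))
     else (if j = 0 then - (si * r * ti) else si + si * r * ti * q * si))"
  have "is_minv 2 K n"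
    unfolding is_minv_2_iff n_def p_q_r_s_def[symmetric]
    by (simp add: algebra_simps s1 pt pt')
  then show ?thesis unfolding minvertible_def by blast
qed

lemma combine_rows:
  fixes x y z a b u v :: "'a::ring_1"
  assumes "x + a * y + b * z = u" "x + y + z = v"
  shows "(a - 1) * y + (b - 1) * z = u - v"
  using assms by (auto simp: algebra_simps)

lemma combine_cols:
  fixes x y z a b u v :: "'a::ring_1"
  assumes "x + y * a + z * b = u" "x + y + z = v"
  shows "y * (a - 1) + z * (b - 1) = u - v"
  using assms by (auto simp: algebra_simps)

lemma is_minv_hat:
  fixes M N :: "nat \<Rightarrow> nat \<Rightarrow> 'a::ring_1"
  assumes "M \<in> Mhat3" "is_minv 3 M N" "j < 3"
  shows "N 0 j + N 1 j + N 2 j = (if j = 0 then 1 else 0)"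
    and "N 0 j + M 1 1 * N 1 j + M 1 2 * N 2 j = (if j = 1 then 1 else 0)"
    and "N 0 j + M 2 1 * N 1 j + M 2 2 * N 2 j = (if j = 2 then 1 else 0)"
    and "N j 0 + N j 1 + N j 2 = (if j = 0 then 1 else 0)"
    and "N j 0 + N j 1 * M 1 1 + N j 2 * M 2 1 = (if j = 1 then 1 else 0)"
    and "N j 0 + N j 1 * M 1 2 + N j 2 * M 2 2 = (if j = 2 then 1 else 0)"
proof -
  have M: "M 0 0 = 1" "M 0 (Suc 0) = 1" "M 0 2 = 1" "M (Suc 0) 0 = 1" "M 2 0 = 1"
    using assms(1) unfolding Mhat3_def by auto
  have "mmult 3 M N i j = (if i = j then 1 else 0)" "mmult 3 N M j i = (if j = i then 1 else 0)"
    if "i < 3" for i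
    using assms(2,3) that unfolding is_minv_def by blast+
  from this[of 0] this[of 1] this[of 2] assms(3) show
    "N 0 j + N 1 j + N 2 j = (if j = 0 then 1 else 0)"
    "N 0 j + M 1 1 * N 1 j + M 1 2 * N 2 j = (if j = 1 then 1 else 0)"
    "N 0 j + M 2 1 * N 1 j + M 2 2 * N 2 j = (if j = 2 then 1 else 0)"
    "N j 0 + N j 1 + N j 2 = (if j = 0 then 1 else 0)"
    "N j 0 + N j 1 * M 1 1 + N j 2 * M 2 1 = (if j = 1 then 1 else 0)"
    "N j 0 + N j 1 * M 1 2 + N j 2 * M 2 2 = (if j = 2 then 1 else 0)"
    unfolding mmult_3 by (auto simp: M)
qed

lemma minvertible_hat_iff:
  fixes M :: "nat \<Rightarrow> nat \<Rightarrow> 'a::ring_1"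
  assumes "M \<in> Mhat3"
  shows "minvertible 3 M \<longleftrightarrow> minvertible 2 (\<lambda>i j. M (Suc i) (Suc j) - 1)"
proof
  assume "minvertible 3 M"
  then obtain N where N: "is_minv 3 M N" unfolding minvertible_def by blast
  note E = is_minv_hat[OF assms N]
  have "is_minv 2 (\<lambda>i j. M (Suc i) (Suc j) - 1) (\<lambda>i j. N (Suc i) (Suc j))"
    unfolding is_minv_2_iff
    using combine_rows[OF E(2) E(1), of 1] combine_rows[OF E(2) E(1), of 2]
      combine_rows[OF E(3) E(1), of 1] combine_rows[OF E(3) E(1), of 2]
      combine_cols[OF E(5) E(4), of 1] combine_cols[OF E(5) E(4), of 2]
      combine_cols[OF E(6) E(4), of 1] combine_cols[OF E(6) E(4), of 2]
    by (simp add: numeral_2_eq_2)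
  then show "minvertible 2 (\<lambda>i j. M (Suc i) (Suc j) - 1)" unfolding minvertible_def by blast
next
  have M: "M 0 0 = 1" "M 0 (Suc 0) = 1" "M 0 2 = 1" "M (Suc 0) 0 = 1" "M 2 0 = 1"
    using assms unfolding Mhat3_def by auto
  assume "minvertible 2 (\<lambda>i j. M (Suc i) (Suc j) - 1)"
  then obtain n where "is_minv 2 (\<lambda>i j. M (Suc i) (Suc j) - 1) n" unfolding minvertible_def by blast
  then have e: "(M 1 1 - 1) * n 0 0 = 1 - (M 1 2 - 1) * n 1 0" "(M 1 1 - 1) * n 0 1 = - ((M 1 2 - 1) * n 1 1)"
    "(M 2 1 - 1) * n 0 0 = - ((M 2 2 - 1) * n 1 0)" "(M 2 1 - 1) * n 0 1 = 1 - (M 2 2 - 1) * n 1 1"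
    "n 0 0 * (M 1 1 - 1) = 1 - n 0 1 * (M 2 1 - 1)" "n 0 0 * (M 1 2 - 1) = - (n 0 1 * (M 2 2 - 1))"
    "n 1 0 * (M 1 1 - 1) = - (n 1 1 * (M 2 1 - 1))" "n 1 0 * (M 1 2 - 1) = 1 - n 1 1 * (M 2 2 - 1)"
    unfolding is_minv_2_iff
    by (simp_all add: numeral_2_eq_2 eq_diff_eq eq_neg_iff_add_eq_0 add.commute)
  define N :: "nat \<Rightarrow> nat \<Rightarrow> 'a" where "N = (\<lambda>i j. if i = 0 then (if j = 0 then 1 + n 0 0 + n 0 1 + n 1 0 + n 1 1
        else if j = 1 then - (n 0 0 + n 1 0) else - (n 0 1 + n 1 1))
     else if i = 1 then (if j = 0 then - (n 0 0 + n 0 1) else if j = 1 then n 0 0 else n 0 1)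
     else (if j = 0 then - (n 1 0 + n 1 1) else if j = 1 then n 1 0 else n 1 1))"
  have "is_minv 3 M N"
    unfolding is_minv_def all_less_3 mmult_3 
    using e by (simp add: N_def M algebra_simps)
  then show "minvertible 3 M" unfolding minvertible_def by blast
qed

lemma
  fixes u x y :: "'a::ring_1"
  assumes "is_unit u"
  shows unit_mult_left_eq_iff: "u * x = y \<longleftrightarrow> x = rinv u * y"
    and unit_mult_right_eq_iff: "x * u = y \<longleftrightarrow> x = y * rinv u"
  using assms by (auto simp: left_rinv_cancel right_rinv_cancel mult.assoc right_rinv left_rinv)

lemma hat_minv_11:
  fixes M N :: "nat \<Rightarrow> nat \<Rightarrow> 'a::ring_1"
  assumes hat: "M \<in> Mhat3" and N: "is_minv 3 M N"
    and "M 1 1 = \<alpha>" "M 1 2 = \<beta>" "M 2 1 = \<gamma>" "M 2 2 = \<delta>" and u: "is_unit (\<delta> - 1)"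
  shows "N 1 2 = - (N 1 1 * (\<beta> - 1) * rinv (\<delta> - 1))"
    and "N 2 1 = - (rinv (\<delta> - 1) * (\<gamma> - 1) * N 1 1)"
    and "is_unit (N 1 1)"
    and "rinv (N 1 1) = (\<alpha> - 1) - (\<beta> - 1) * rinv (\<delta> - 1) * (\<gamma> - 1)"
proof -
  note E = is_minv_hat[OF hat N, unfolded assms(3-6)]
  have r: "N 1 1 * (\<alpha> - 1) + N 1 2 * (\<gamma> - 1) = 1" "N 1 1 * (\<beta> - 1) + N 1 2 * (\<delta> - 1) = 0"
    using combine_cols[OF E(5) E(4), of 1] combine_cols[OF E(6) E(4), of 1] by simp_all
  have c: "(\<alpha> - 1) * N 1 1 + (\<beta> - 1) * N 2 1 = 1" "(\<gamma> - 1) * N 1 1 + (\<delta> - 1) * N 2 1 = 0"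
    using combine_rows[OF E(2) E(1), of 1] combine_rows[OF E(3) E(1), of 1] by simp_all
  have "N 1 2 * (\<delta> - 1) = - (N 1 1 * (\<beta> - 1))"
    using r(2) by (simp add: eq_neg_iff_add_eq_0 add.commute)
  then show N12: "N 1 2 = - (N 1 1 * (\<beta> - 1) * rinv (\<delta> - 1))"
    using u by (simp add: unit_mult_right_eq_iff)
  have "(\<delta> - 1) * N 2 1 = - ((\<gamma> - 1) * N 1 1)"
    using c(2) by (simp add: eq_neg_iff_add_eq_0 add.commute)
  then show N21: "N 2 1 = - (rinv (\<delta> - 1) * (\<gamma> - 1) * N 1 1)"
    using u by (simp add: unit_mult_left_eq_iff mult.assoc)
  have "N 1 1 * ((\<alpha> - 1) - (\<beta> - 1) * rinv (\<delta> - 1) * (\<gamma> - 1)) = 1"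
    "((\<alpha> - 1) - (\<beta> - 1) * rinv (\<delta> - 1) * (\<gamma> - 1)) * N 1 1 = 1"
    using r(1) c(1) unfolding N12 N21 by (simp_all add: algebra_simps)
  then show "is_unit (N 1 1)" "rinv (N 1 1) = (\<alpha> - 1) - (\<beta> - 1) * rinv (\<delta> - 1) * (\<gamma> - 1)"
    by (simp_all add: is_unitI rinv_eqI)
qed

lemma hat_minv_block:
  fixes M N :: "nat \<Rightarrow> nat \<Rightarrow> 'a::ring_1"
  assumes hat: "M \<in> Mhat3" and N: "is_minv 3 M N"
    and "M 1 1 = \<alpha>" "M 1 2 = \<beta>" "M 2 1 = \<gamma>" "M 2 2 = \<delta>" and u: "is_unit (\<delta> - 1)"
  shows "N 1 0 = - (N 1 1 * (\<delta> - \<beta>) * rinv (\<delta> - 1))"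
    and "N 0 1 = - (rinv (\<delta> - 1) * (\<delta> - \<gamma>) * N 1 1)"
    and "N 0 0 = rinv (\<delta> - 1) * \<delta> + rinv (\<delta> - 1) * (\<delta> - \<gamma>) * N 1 1 * (\<delta> - \<beta>) * rinv (\<delta> - 1)"
proof -
  define s where "s = rinv (\<delta> - 1)"
  note E = is_minv_hat[OF hat N, unfolded assms(3-6)]
  note N11 = hat_minv_11[OF assms, folded s_def]
  have s: "(\<delta> - 1) * s = 1" "s * (\<delta> - 1) = 1"
    using u by (simp_all add: s_def right_rinv left_rinv)
  have "(\<delta> - 1) * N 2 0 = - 1 - (\<gamma> - 1) * N 1 0"
    using combine_rows[OF E(3) E(1), of 0] by (simp add: eq_diff_eq add.commute)
  then have N20: "N 2 0 = - s - s * (\<gamma> - 1) * N 1 0"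
    using u by (simp add: s_def unit_mult_left_eq_iff right_diff_distrib mult.assoc[symmetric])
  have "N 1 0 = - N 1 1 * ((\<delta> - 1) * s) + N 1 1 * (\<beta> - 1) * s"
    using E(4)[of 1] unfolding N11(1) s(1) by (simp add: algebra_simps eq_neg_iff_add_eq_0)
  then have N10: "N 1 0 = - (N 1 1 * (\<delta> - \<beta>) * s)" by (simp add: algebra_simps)
  then show "N 1 0 = - (N 1 1 * (\<delta> - \<beta>) * rinv (\<delta> - 1))" by (simp add: s_def)
  have "N 0 1 = - (s * (\<delta> - 1)) * N 1 1 + s * (\<gamma> - 1) * N 1 1"
    using E(1)[of 1] unfolding N11(2) s(2) by (simp add: algebra_simps eq_neg_iff_add_eq_0)
  then show "N 0 1 = - (rinv (\<delta> - 1) * (\<delta> - \<gamma>) * N 1 1)" by (simp add: s_def algebra_simps)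
  have "s * \<delta> = s * (\<delta> - 1) + s" by (simp add: algebra_simps)
  then have s\<delta>: "s * \<delta> = 1 + s" unfolding s(2) .
  have "N 0 0 = 1 + s - s * (\<delta> - 1) * N 1 0 + s * (\<gamma> - 1) * N 1 0"
    using E(1)[of 0] unfolding N20 s(2) by (simp add: algebra_simps eq_diff_eq)
  also have "\<dots> = s * \<delta> - s * (\<delta> - \<gamma>) * N 1 0" unfolding s\<delta> by (simp add: algebra_simps)
  finally show "N 0 0 = rinv (\<delta> - 1) * \<delta> + rinv (\<delta> - 1) * (\<delta> - \<gamma>) * N 1 1 * (\<delta> - \<beta>) * rinv (\<delta> - 1)"
    unfolding N10 by (simp add: s_def mult.assoc)
qed

lemma hat_minv_quasidet:
  fixes M N :: "nat \<Rightarrow> nat \<Rightarrow> 'a::ring_1"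
  assumes "M \<in> Mhat3" "is_minv 3 M N"
    and "is_unit (M 2 2 - 1)" "is_unit (M 2 2 - M 1 2)" "is_unit (M 2 2 - M 2 1)"
  shows "is_unit (N 0 1)" and "is_unit (N 1 0)" and "is_unit (N 1 1)"
    and "N 0 1 * rinv (N 1 1) * N 1 0 = N 0 0 - rinv (M 2 2 - 1) * M 2 2"
proof -
  note B = hat_minv_block[OF assms(1,2) refl refl refl refl assms(3)]
    and N11 = hat_minv_11(3)[OF assms(1,2) refl refl refl refl assms(3)]
  have us: "is_unit (rinv (M 2 2 - 1))" using assms(3) by (rule is_unit_rinv)
  show "is_unit (N 1 1)" by (rule N11)
  show "is_unit (N 0 1)" "is_unit (N 1 0)"
    unfolding B(1,2) using assms(4,5) us N11 by (simp_all add: is_unit_uminus is_unit_mult)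
  have "N 0 1 * rinv (N 1 1) * N 1 0
      = rinv (M 2 2 - 1) * (M 2 2 - M 2 1) * (N 1 1 * rinv (N 1 1) * N 1 1) * (M 2 2 - M 1 2) * rinv (M 2 2 - 1)"
    unfolding B(1,2) by (simp add: mult.assoc)
  also have "\<dots> = N 0 0 - rinv (M 2 2 - 1) * M 2 2"
    unfolding B(3) using N11 by (simp add: right_rinv)
  finally show "N 0 1 * rinv (N 1 1) * N 1 0 = N 0 0 - rinv (M 2 2 - 1) * M 2 2" .
qed

lemma bij_betw_swap_1_2:
  "j \<in> {1, 2} \<Longrightarrow> bij_betw (\<lambda>i::nat. if i = 1 then j else if i = 2 then 3 - j else i) {..<3} {..<3}"
  by (rule bij_betw_byWitness[where f' = "\<lambda>i::nat. if i = 1 then j else if i = 2 then 3 - j else i"]) auto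

text \<open>For \<open>j \<in> {1, 2}\<close>, \<open>3 - j\<close> is the other index; permuting rows and columns 1 and 2
  reduces this to the case \<open>j = k = 1\<close>.\<close>

lemma hat_minv_quasidet_jk:
  fixes M N :: "nat \<Rightarrow> nat \<Rightarrow> 'a::ring_1"
  assumes "M \<in> Mhat3" "is_minv 3 M N" "j \<in> {1, 2}" "k \<in> {1, 2}"
    and "is_unit (M (3 - j) (3 - k) - 1)" "is_unit (M (3 - j) (3 - k) - M j (3 - k))"
      "is_unit (M (3 - j) (3 - k) - M (3 - j) k)"
  shows "is_unit (N 0 j)" and "is_unit (N k 0)" and "is_unit (N k j)"
    and "N 0 j * rinv (N k j) * N k 0 = N 0 0 - rinv (M (3 - j) (3 - k) - 1) * M (3 - j) (3 - k)"
proof -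
  define p where "p = (\<lambda>i::nat. if i = 1 then j else if i = 2 then 3 - j else i)"
  define q where "q = (\<lambda>i::nat. if i = 1 then k else if i = 2 then 3 - k else i)"
  have "is_minv 3 (\<lambda>i l. M (p i) (q l)) (\<lambda>i l. N (q i) (p l))"
    using is_minv_reindex[OF bij_betw_swap_1_2[OF assms(3)] bij_betw_swap_1_2[OF assms(4)] assms(2)]
    unfolding p_def q_def .
  moreover have "(\<lambda>i l. M (p i) (q l)) \<in> Mhat3"
    using assms(1,3,4) unfolding Mhat3_def p_def q_def by (auto simp: all_less_3)
  ultimately show "is_unit (N 0 j)" "is_unit (N k 0)" "is_unit (N k j)"
    "N 0 j * rinv (N k j) * N k 0 = N 0 0 - rinv (M (3 - j) (3 - k) - 1) * M (3 - j) (3 - k)"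
    using hat_minv_quasidet[of "\<lambda>i l. M (p i) (q l)" "\<lambda>i l. N (q i) (p l)"] assms(5-7)
    by (simp_all add: p_def q_def)
qed

section \<open>Phi of a hat matrix\<close>

lemma Phi_eq:
  fixes M :: "nat \<Rightarrow> nat \<Rightarrow> 'a::ring_1"
  assumes "is_unit (minv 3 M 0 0)" "is_unit (minv 3 M 0 j)" "is_unit (minv 3 M k j)" "is_unit (minv 3 M k 0)"
  shows "Phi M j k = minv 3 M 0 j * rinv (minv 3 M k j) * minv 3 M k 0 * rinv (minv 3 M 0 0)"
  using assms
  by (simp add: Phi_def J2_def LamL_def rinv_mult is_unit_mult is_unit_rinv rinv_rinv mult.assoc)

lemma Phi_hat:
  fixes M :: "nat \<Rightarrow> nat \<Rightarrow> 'a::ring_1"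
  assumes hat: "M \<in> Mhat3" and inv: "minvertible 3 M" and u00: "is_unit (minv 3 M 0 0)"
    and u: "\<And>i l. i \<in> {1, 2} \<Longrightarrow> l \<in> {1, 2} \<Longrightarrow>
      is_unit (M i l - 1) \<and> is_unit (M i l - M (3 - i) l) \<and> is_unit (M i l - M i (3 - l))"
  shows "Phi M \<in> Mhat3"
    and "j \<in> {1, 2} \<Longrightarrow> k \<in> {1, 2} \<Longrightarrow>
      Phi M j k = 1 - rinv (M (3 - j) (3 - k) - 1) * M (3 - j) (3 - k) * rinv (minv 3 M 0 0)"
proof -
  define N where "N = minv 3 M"
  have Q: "is_unit (N 0 j) \<and> is_unit (N k 0) \<and> is_unit (N k j) \<and>
      N 0 j * rinv (N k j) * N k 0 = N 0 0 - rinv (M (3 - j) (3 - k) - 1) * M (3 - j) (3 - k)"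
    if "j \<in> {1, 2}" "k \<in> {1, 2}" for j k
  proof -
    have "3 - (3 - j) = j" "3 - (3 - k) = k" "3 - j \<in> {1, 2}" "3 - k \<in> {1, 2}" using that by auto
    then show ?thesis
      using hat_minv_quasidet_jk[OF hat is_minv_minv[OF inv] that] u[of "3 - j" "3 - k"]
      unfolding N_def by metis
  qed
  have u0: "is_unit (N 0 l)" "is_unit (N l 0)" if "l < 3" for l
    using Q[of l l] u00 that unfolding N_def[symmetric] by (auto simp: less_Suc_eq numeral_3_eq_3)
  show "Phi M \<in> Mhat3"
    unfolding Mhat3_def using u0 u00 Phi_eq[of M] unfolding N_def
    by (simp add: left_rinv_cancel right_rinv mult.assoc)
  assume jk: "j \<in> {1, 2}" "k \<in> {1, 2}"
  have "Phi M j k = (N 0 0 - rinv (M (3 - j) (3 - k) - 1) * M (3 - j) (3 - k)) * rinv (N 0 0)"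
    using Phi_eq[of M j k] Q[OF jk] u00 unfolding N_def by simp
  then show "Phi M j k = 1 - rinv (M (3 - j) (3 - k) - 1) * M (3 - j) (3 - k) * rinv (minv 3 M 0 0)"
    using u00 unfolding N_def by (simp add: left_diff_distrib right_rinv)
qed

section \<open>Consequences of membership in S\<close>

lemma S3_minor_minvertible:
  assumes "M \<in> S3" "sorted_wrt (<) rs" "sorted_wrt (<) cs" "length rs = length cs" "rs \<noteq> []"
    "set rs \<subseteq> {..<3}" "set cs \<subseteq> {..<3}"
  shows "minvertible (length rs) (submat M rs cs)"
  using assms unfolding S3_def by blast

lemma S3_entry_unit:
  fixes M :: "nat \<Rightarrow> nat \<Rightarrow> 'a::ring_1"
  assumes "M \<in> S3" "i < 3" "j < 3"
  shows "is_unit (M i j)"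
proof -
  obtain n where "is_minv 1 (submat M [i] [j]) n"
    using S3_minor_minvertible[OF assms(1), of "[i]" "[j]"] assms unfolding minvertible_def by auto
  then have "M i j * n 0 0 = 1" "n 0 0 * M i j = 1"
    unfolding is_minv_def mmult_1 submat_def by auto
  then show ?thesis by (rule is_unitI)
qed

lemma S3_schur_unit:
  fixes M :: "nat \<Rightarrow> nat \<Rightarrow> 'a::ring_1"
  assumes "M \<in> S3" "r0 < r1" "r1 < 3" "c0 < c1" "c1 < 3"
  shows "is_unit (M r1 c1 - M r1 c0 * rinv (M r0 c0) * M r0 c1)"
proof -
  obtain n where "is_minv 2 (submat M [r0, r1] [c0, c1]) n"
    using S3_minor_minvertible[OF assms(1), of "[r0, r1]" "[c0, c1]"] assms
    unfolding minvertible_def by (auto simp: numeral_2_eq_2)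
  from is_minv_2_schur(1)[OF this] show ?thesis
    using S3_entry_unit[OF assms(1), of r0 c0] assms by (simp add: submat_def)
qed

lemma S3_minvertible:
  fixes M :: "nat \<Rightarrow> nat \<Rightarrow> 'a::ring_1"
  assumes "M \<in> S3"
  shows "minvertible 3 M"
proof -
  obtain N where "is_minv 3 (submat M [0, 1, 2] [0, 1, 2]) N"
    using S3_minor_minvertible[OF assms, of "[0, 1, 2]" "[0, 1, 2]"]
    unfolding minvertible_def by (auto simp: numeral_3_eq_3)
  then have "is_minv 3 M N"
    by (rule is_minv_cong[rotated]) (auto simp: submat_def numeral_3_eq_3 numeral_2_eq_2 less_Suc_eq)
  then show ?thesis unfolding minvertible_def by blast
qed

lemma S3_minvertible_lower_block:
  fixes M :: "nat \<Rightarrow> nat \<Rightarrow> 'a::ring_1"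
  assumes "M \<in> S3"
  shows "minvertible 2 (\<lambda>i j. M (Suc i) (Suc j))"
proof -
  obtain n where "is_minv 2 (submat M [1, 2] [1, 2]) n"
    using S3_minor_minvertible[OF assms, of "[1, 2]" "[1, 2]"]
    unfolding minvertible_def by (auto simp: numeral_2_eq_2)
  then have "is_minv 2 (\<lambda>i j. M (Suc i) (Suc j)) n"
    by (rule is_minv_cong[rotated]) (auto simp: submat_def numeral_2_eq_2 less_Suc_eq)
  then show ?thesis unfolding minvertible_def by blast
qed

text \<open>The corner entry of the inverse of a hat matrix is inverted by one minus the sum of the
  entries of the inverse of its lower right block.\<close>

lemma hat_minv_00_unit:
  fixes M N :: "nat \<Rightarrow> nat \<Rightarrow> 'a::ring_1"
  assumes hat: "M \<in> Mhat3" and N: "is_minv 3 M N" and D: "minvertible 2 (\<lambda>i j. M (Suc i) (Suc j))"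
  shows "is_unit (N 0 0)"
proof -
  obtain m where "is_minv 2 (\<lambda>i j. M (Suc i) (Suc j)) m" using D unfolding minvertible_def by blast
  then have m: "M 1 1 * m 0 0 + M 1 2 * m 1 0 = 1" "M 1 1 * m 0 1 + M 1 2 * m 1 1 = 0"
    "M 2 1 * m 0 0 + M 2 2 * m 1 0 = 0" "M 2 1 * m 0 1 + M 2 2 * m 1 1 = 1"
    "m 0 0 * M 1 1 + m 0 1 * M 2 1 = 1" "m 0 0 * M 1 2 + m 0 1 * M 2 2 = 0"
    "m 1 0 * M 1 1 + m 1 1 * M 2 1 = 0" "m 1 0 * M 1 2 + m 1 1 * M 2 2 = 1"
    unfolding is_minv_2_iff by (simp_all add: numeral_2_eq_2)
  note E = is_minv_hat[OF hat N]
  have r: "M 1 1 * N 1 0 + M 1 2 * N 2 0 = - N 0 0" "M 2 1 * N 1 0 + M 2 2 * N 2 0 = - N 0 0"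
    using E(2)[of 0] E(3)[of 0] by (simp_all add: eq_neg_iff_add_eq_0 add_ac)
  have c: "N 0 1 * M 1 1 + N 0 2 * M 2 1 = - N 0 0" "N 0 1 * M 1 2 + N 0 2 * M 2 2 = - N 0 0"
    using E(5)[of 0] E(6)[of 0] by (simp_all add: eq_neg_iff_add_eq_0 add_ac)
  have l: "s * x + t * y = (u + v) * e"
    if "u * p + v * r = s" "u * q + v * w = t" "p * x + q * y = e" "r * x + w * y = e" for u v p q r w s t x y e :: 'a
  proof -
    have "s * x + t * y = u * (p * x + q * y) + v * (r * x + w * y)"
      unfolding that(1,2)[symmetric] by (simp add: algebra_simps)
    then show ?thesis unfolding that(3,4) by (simp add: algebra_simps)
  qed
  have rt: "x * s + y * t = e * (u + v)"
    if "p * u + q * v = s" "r * u + w * v = t" "x * p + y * r = e" "x * q + y * w = e" for u v p q r w s t x y e :: 'a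
  proof -
    have "x * s + y * t = (x * p + y * r) * u + (x * q + y * w) * v"
      unfolding that(1,2)[symmetric] by (simp add: algebra_simps)
    then show ?thesis unfolding that(3,4) by (simp add: algebra_simps)
  qed
  have N': "N 1 0 = - ((m 0 0 + m 0 1) * N 0 0)" "N 2 0 = - ((m 1 0 + m 1 1) * N 0 0)"
    "N 0 1 = - (N 0 0 * (m 0 0 + m 1 0))" "N 0 2 = - (N 0 0 * (m 0 1 + m 1 1))"
    using l[OF m(5,6) r] l[OF m(7,8) r] rt[OF m(1,3) c] rt[OF m(2,4) c] by simp_all
  have "(1 - (m 0 0 + m 0 1 + m 1 0 + m 1 1)) * N 0 0 = N 0 0 + N 1 0 + N 2 0"
    "N 0 0 * (1 - (m 0 0 + m 0 1 + m 1 0 + m 1 1)) = N 0 0 + N 0 1 + N 0 2"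
    unfolding N' by (simp_all add: algebra_simps)
  then have "(1 - (m 0 0 + m 0 1 + m 1 0 + m 1 1)) * N 0 0 = 1"
    "N 0 0 * (1 - (m 0 0 + m 0 1 + m 1 0 + m 1 1)) = 1"
    using E(1)[of 0] E(4)[of 0] by simp_all
  then show ?thesis by (simp add: is_unitI)
qed

lemma Shat3_units:
  fixes A :: "nat \<Rightarrow> nat \<Rightarrow> 'a::ring_1"
  assumes "A \<in> Shat3" "A 1 1 = a" "A 1 2 = b" "A 2 1 = c" "A 2 2 = d"
  shows "is_unit a" "is_unit b" "is_unit c" "is_unit d"
    and "is_unit (a - 1)" "is_unit (b - 1)" "is_unit (c - 1)" "is_unit (d - 1)"
    and "is_unit (b - a)" "is_unit (c - a)" "is_unit (d - b)" "is_unit (d - c)"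
    and "is_unit (d - c * rinv a * b)"
proof -
  have S: "A \<in> S3" and hat: "A 0 0 = 1" "A 0 (Suc 0) = 1" "A 0 2 = 1" "A (Suc 0) 0 = 1" "A 2 0 = 1"
    using assms(1) unfolding Shat3_def Mhat3_def by auto
  note entry = S3_entry_unit[OF S] and schur = S3_schur_unit[OF S]
  note abcd = assms(2-5) assms(2-5)[unfolded One_nat_def]
  show "is_unit a" "is_unit b" "is_unit c" "is_unit d"
    using entry[of 1 1] entry[of 1 2] entry[of 2 1] entry[of 2 2] abcd by simp_all
  then show "is_unit (d - c * rinv a * b)" using schur[of 1 2 1 2] abcd by simp
  show "is_unit (a - 1)" "is_unit (b - 1)" "is_unit (c - 1)" "is_unit (d - 1)"
    "is_unit (b - a)" "is_unit (c - a)" "is_unit (d - b)" "is_unit (d - c)"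
    using schur[of 0 1 0 1] schur[of 0 1 0 2] schur[of 0 2 0 1] schur[of 0 2 0 2]
      schur[of 0 1 1 2] schur[of 1 2 0 1] schur[of 1 2 0 2] schur[of 0 2 1 2]
    by (simp_all add: hat abcd rinv_one)
qed

text \<open>The scalar \<open>\<zeta>\<close> of the theorem is \<open>-(N\<^sub>0\<^sub>2 (d - c))\<^sup>-\<^sup>1\<close>.\<close>

lemma hat_minv_zeta:
  fixes M N :: "nat \<Rightarrow> nat \<Rightarrow> 'a::ring_1"
  assumes hat: "M \<in> Mhat3" and N: "is_minv 3 M N"
    and "M 1 1 = a" "M 1 2 = b" "M 2 1 = c" "M 2 2 = d"
    and u02: "is_unit (N 0 2)" and udc: "is_unit (d - c)" and uba: "is_unit (b - a)"
  defines "\<zeta> \<equiv> rinv (d - c) * (c - 1) - rinv (b - a) * (a - 1)"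
  shows "is_unit \<zeta>" and "\<zeta> * N 0 0 = rinv (d - c) * c - rinv (b - a) * a"
proof -
  note E = is_minv_hat[OF hat N, of 0, unfolded assms(3-6), simplified]
  have k1: "N 0 1 * (a - 1) + N 0 2 * (c - 1) = -1" using combine_cols[OF E(5) E(4)] by simp
  have k2: "N 0 1 * (b - 1) + N 0 2 * (d - 1) = -1" using combine_cols[OF E(6) E(4)] by simp
  have "N 0 1 * (b - a) + N 0 2 * (d - c)
      = (N 0 1 * (b - 1) + N 0 2 * (d - 1)) - (N 0 1 * (a - 1) + N 0 2 * (c - 1))"
    by (simp add: algebra_simps)
  then have "N 0 1 * (b - a) = - (N 0 2 * (d - c))"
    unfolding k1 k2 by (simp add: eq_neg_iff_add_eq_0)
  then have N01: "N 0 1 = - (N 0 2 * (d - c) * rinv (b - a))"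
    using uba by (simp add: unit_mult_right_eq_iff)
  define P where "P = N 0 2 * (d - c)"
  have uP: "is_unit P" "rinv P = rinv (d - c) * rinv (N 0 2)"
    unfolding P_def using u02 udc by (simp_all add: is_unit_mult rinv_mult)
  have "P * \<zeta> = N 0 2 * ((d - c) * rinv (d - c)) * (c - 1) - N 0 2 * (d - c) * rinv (b - a) * (a - 1)"
    unfolding P_def \<zeta>_def right_diff_distrib[of "N 0 2 * (d - c)"] by (simp only: mult.assoc)
  also have "\<dots> = N 0 2 * (c - 1) - N 0 2 * (d - c) * rinv (b - a) * (a - 1)"
    using right_rinv[OF udc] by simp
  also have "\<dots> = N 0 1 * (a - 1) + N 0 2 * (c - 1)"
    unfolding N01 by (simp only: mult_minus_left diff_conv_add_uminus add.commute)
  also have "\<dots> = -1" by (rule k1)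
  finally have "\<zeta> = - rinv P" using uP(1) by (simp add: unit_mult_left_eq_iff)
  then show "is_unit \<zeta>" using uP(1) by (simp add: is_unit_uminus is_unit_rinv)
  have \<zeta>02: "\<zeta> * N 0 2 = - rinv (d - c)"
    unfolding \<open>\<zeta> = - rinv P\<close> uP(2) using u02 by (simp add: mult.assoc left_rinv)
  have "\<zeta> * N 0 1 = - (\<zeta> * N 0 2) * ((d - c) * rinv (b - a))"
    unfolding N01 by (simp add: mult.assoc)
  also have "\<dots> = rinv (b - a)"
    unfolding \<zeta>02 using udc by (simp add: left_rinv_cancel)
  finally have \<zeta>01: "\<zeta> * N 0 1 = rinv (b - a)" .
  have sum: "N 0 0 + N 0 1 + N 0 2 = 1" using E(4) by simp
  have "\<zeta> * N 0 0 = \<zeta> * (N 0 0 + N 0 1 + N 0 2) - \<zeta> * N 0 1 - \<zeta> * N 0 2"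
    by (simp add: algebra_simps)
  also have "\<dots> = rinv (d - c) * c - rinv (b - a) * a"
    unfolding sum \<zeta>01 \<zeta>02 by (simp add: \<zeta>_def algebra_simps)
  finally show "\<zeta> * N 0 0 = rinv (d - c) * c - rinv (b - a) * a" .
qed

lemma J2_schur_factorisation:
  fixes a b c d ai bi ci di pi qi ri si :: "'a::ring_1"
  assumes a: "a * ai = 1" "ai * a = 1" and p: "(a - 1) * pi = 1" "pi * (a - 1) = 1"
    and q: "(b - 1) * qi = 1" and b: "bi * b = 1"
    and r: "(c - 1) * ri = 1" and c: "ci * c = 1"
    and s: "si * (d - 1) = 1" and d: "d * di = 1"
  shows "si * d * ((di - 1) - (bi - 1) * (- (pi * a)) * (ci - 1)) * (ri * c * ai * (a - 1) * qi * b)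
       = si * d - ri * c * ai * (a - 1) * qi * b"
proof -
  define Y where "Y = ai * (a - 1) * qi * b"
  have F1: "si * d * (di - 1) = -1"
  proof -
    have "si * d * (di - 1) = si * (d * di) - si * d" by (simp add: algebra_simps)
    also have "\<dots> = - (si * (d - 1))" using d by (simp add: algebra_simps)
    finally show ?thesis using s by simp
  qed
  have F2: "(ci - 1) * ri * c = -1"
  proof -
    have "ci - 1 = - (ci * (c - 1))" using c by (simp add: algebra_simps)
    then have "(ci - 1) * ri * c = - (ci * ((c - 1) * ri) * c)" by (simp add: mult.assoc)
    then show ?thesis using r c by simp
  qed
  have F3: "pi * a * Y = qi * b"
  proof -
    have "pi * a * Y = pi * (a * ai) * (a - 1) * qi * b" unfolding Y_def by (simp add: mult.assoc)
    also have "\<dots> = (pi * (a - 1)) * qi * b" using a by (simp add: mult.assoc)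
    finally show ?thesis using p by simp
  qed
  have F4: "(bi - 1) * (qi * b) = -1"
  proof -
    have "bi - 1 = - (bi * (b - 1))" using b by (simp add: algebra_simps)
    then have "(bi - 1) * (qi * b) = - (bi * ((b - 1) * qi) * b)" by (simp add: mult.assoc)
    then show ?thesis using q b by simp
  qed
  have "si * d * ((di - 1) - (bi - 1) * (- (pi * a)) * (ci - 1)) * (ri * c * Y)
      = si * d * (di - 1) * (ri * c * Y) + si * d * (bi - 1) * (pi * a) * (((ci - 1) * ri * c) * Y)"
    by (simp add: algebra_simps)
  also have "\<dots> = - (ri * c * Y) + si * d * (bi - 1) * (- (pi * a * Y))"
    unfolding F1 F2 by (simp add: mult.assoc)
  also have "\<dots> = - (ri * c * Y) + si * d * (- ((bi - 1) * (qi * b)))"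
    unfolding F3 by (simp add: mult.assoc)
  also have "\<dots> = si * d - ri * c * Y" unfolding F4 by simp
  finally show ?thesis unfolding Y_def by (simp add: mult.assoc)
qed

text \<open>Up to unit factors, the Schur complement of \<open>J\<^sub>2(A)\<close> is the Schur complement of
  \<open>\<Phi>(A)\<close>; this is how the invertibility of \<open>J\<^sub>2(A)\<close> enters.\<close>

lemma Shat3_J2_schur_unit:
  fixes A :: "nat \<Rightarrow> nat \<Rightarrow> 'a::ring_1"
  assumes A: "A \<in> Shat3" "A 1 1 = a" "A 1 2 = b" "A 2 1 = c" "A 2 2 = d"
  shows "is_unit (rinv (d - 1) * d - rinv (c - 1) * c * rinv a * (a - 1) * rinv (b - 1) * b)"
proof -
  note u = Shat3_units[OF A]
  have hat: "J2 A \<in> Mhat3" and inv: "minvertible 3 (J2 A)"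
    using A(1) unfolding Shat3_def S3_def Mhat3_def by (auto simp: J2_def rinv_one)
  have J: "J2 A (Suc 0) (Suc 0) = rinv a" "J2 A (Suc 0) 2 = rinv c"
    "J2 A 2 (Suc 0) = rinv b" "J2 A 2 2 = rinv d"
    using A(2-5) by (simp_all add: J2_def)
  obtain n where "is_minv 2 (\<lambda>i j. J2 A (Suc i) (Suc j) - 1) n"
    using inv[unfolded minvertible_hat_iff[OF hat]] unfolding minvertible_def by blast
  moreover have ai1: "rinv a - 1 = - (rinv a * (a - 1))"
    using u(1) by (simp add: algebra_simps left_rinv)
  then have "is_unit (rinv a - 1)" "rinv (rinv a - 1) = - (rinv (a - 1) * a)"
    using u(1,5) by (simp_all add: is_unit_uminus is_unit_mult is_unit_rinv rinv_uminus rinv_mult rinv_rinv)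
  ultimately have "is_unit ((rinv d - 1) - (rinv b - 1) * (- (rinv (a - 1) * a)) * (rinv c - 1))"
    using is_minv_2_schur(1)[of "\<lambda>i j. J2 A (Suc i) (Suc j) - 1" n] J by (simp add: numeral_2_eq_2)
  then have "is_unit (rinv (d - 1) * d * ((rinv d - 1) - (rinv b - 1) * (- (rinv (a - 1) * a)) * (rinv c - 1))
      * (rinv (c - 1) * c * rinv a * (a - 1) * rinv (b - 1) * b))"
    using u by (simp only: is_unit_mult is_unit_rinv)
  also have "rinv (d - 1) * d * ((rinv d - 1) - (rinv b - 1) * (- (rinv (a - 1) * a)) * (rinv c - 1))
      * (rinv (c - 1) * c * rinv a * (a - 1) * rinv (b - 1) * b)
    = rinv (d - 1) * d - rinv (c - 1) * c * rinv a * (a - 1) * rinv (b - 1) * b"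
    by (rule J2_schur_factorisation) (simp_all add: u right_rinv left_rinv)
  finally show ?thesis .
qed

lemma Shat3_zeta:
  fixes A :: "nat \<Rightarrow> nat \<Rightarrow> 'a::ring_1"
  assumes A: "A \<in> Shat3" "A 1 1 = a" "A 1 2 = b" "A 2 1 = c" "A 2 2 = d"
  defines "\<zeta> \<equiv> rinv (d - c) * (c - 1) - rinv (b - a) * (a - 1)"
  shows "is_unit (minv 3 A 0 0)" and "is_unit \<zeta>"
    and "\<zeta> * minv 3 A 0 0 = rinv (d - c) * c - rinv (b - a) * a"
proof -
  note u = Shat3_units[OF A]
  have S: "A \<in> S3" and hat: "A \<in> Mhat3" using A(1) unfolding Shat3_def by auto
  have N: "is_minv 3 A (minv 3 A)" by (rule is_minv_minv[OF S3_minvertible[OF S]])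
  show "is_unit (minv 3 A 0 0)" by (rule hat_minv_00_unit[OF hat N S3_minvertible_lower_block[OF S]])
  have "is_unit (minv 3 A 0 2)"
    using hat_minv_quasidet_jk(1)[OF hat N, of 2 2] A(2-5) u(5,9,10)
    by (simp add: is_unit_minus_commute)
  from hat_minv_zeta[OF hat N A(2-5) this u(12,9)]
  show "is_unit \<zeta>" "\<zeta> * minv 3 A 0 0 = rinv (d - c) * c - rinv (b - a) * a"
    unfolding \<zeta>_def by simp_all
qed

lemma Phi_Shat3:
  fixes A :: "nat \<Rightarrow> nat \<Rightarrow> 'a::ring_1"
  assumes A: "A \<in> Shat3" "A 1 1 = a" "A 1 2 = b" "A 2 1 = c" "A 2 2 = d"
  defines "k \<equiv> rinv (minv 3 A 0 0)"
  shows "Phi A \<in> Mhat3"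
    and "Phi A 1 1 = 1 - rinv (d - 1) * d * k" and "Phi A 1 2 = 1 - rinv (c - 1) * c * k"
    and "Phi A 2 1 = 1 - rinv (b - 1) * b * k" and "Phi A 2 2 = 1 - rinv (a - 1) * a * k"
proof -
  note u = Shat3_units[OF A]
  have S: "A \<in> S3" and hat: "A \<in> Mhat3" using A(1) unfolding Shat3_def by auto
  have units: "is_unit (A i l - 1) \<and> is_unit (A i l - A (3 - i) l) \<and> is_unit (A i l - A i (3 - l))"
    if "i \<in> {1, 2}" "l \<in> {1, 2}" for i l
    using that A(2-5) u(5-12) by (auto simp: is_unit_minus_commute)
  note P = Phi_hat[OF hat S3_minvertible[OF S] Shat3_zeta(1)[OF A] units]
  show "Phi A \<in> Mhat3" by (rule P(1))
  show "Phi A 1 1 = 1 - rinv (d - 1) * d * k" "Phi A 1 2 = 1 - rinv (c - 1) * c * k"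
    "Phi A 2 1 = 1 - rinv (b - 1) * b * k" "Phi A 2 2 = 1 - rinv (a - 1) * a * k"
    using P(2)[of 1 1] P(2)[of 1 2] P(2)[of 2 1] P(2)[of 2 2] A(2-5) by (simp_all add: k_def)
qed

section \<open>The second application of Phi\<close>

lemma difference_of_inverses_identity:
  fixes a c ai pi ri :: "'a::ring_1"
  assumes "a * ai = 1" "ai * a = 1" "(a - 1) * pi = 1" "pi * (a - 1) = 1" "(c - 1) * ri = 1" "ri * (c - 1) = 1"
  shows "(c - 1) * (ri - pi) * ai * (a - 1) = (a - c) * ai"
proof -
  have r: "ai * (a * z) = z" "a * (ai * z) = z" for z using assms by (simp_all add: mult.assoc[symmetric])
  have c1: "c * ri = 1 + ri" using assms(5) by (simp add: algebra_simps)
  have c2: "c * (ri * z) = z + ri * z" for z using c1 by (metis distrib_right mult.assoc mult_1_left)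
  have p1: "pi * a = 1 + pi" using assms(4) by (simp add: algebra_simps)
  have pa: "pi * ai = pi - ai"
  proof -
    have "pi * ai = pi * (a - (a - 1)) * ai" by simp
    also have "\<dots> = pi * a * ai - pi * (a - 1) * ai" by (simp add: algebra_simps)
    also have "\<dots> = pi - ai" using assms by (simp add: mult.assoc)
    finally show ?thesis .
  qed
  have pa2: "pi * (ai * z) = pi * z - ai * z" for z using pa by (metis left_diff_distrib mult.assoc)
  show ?thesis by (simp add: algebra_simps assms r c1 c2 pa pa2 p1)
qed

lemma one_minus_X_factor:
  fixes a b c d ai si ri qi dci dbi :: "'a::ring_1"
  assumes a1: "a * ai = 1" "ai * a = 1" and s1: "(d - 1) * si = 1" "si * (d - 1) = 1"
    and r1: "(c - 1) * ri = 1" and q1: "(b - 1) * qi = 1" "qi * (b - 1) = 1"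
    and dc: "dci * (d - c) = 1" and db: "(d - b) * dbi = 1"
  shows "1 - dci * (d - c * ai * b) * dbi * (d - 1) = dci * (c - 1) * (si * d - ri * c * ai * (a - 1) * qi * b) * (b - 1) * dbi * (d - 1)"
proof -
  define W where "W = d + (c - 1) * si * d * (b - 1) - c * b"
  have i: "(d - c) * si * (d - b) = W"
  proof -
    have e1: "si * d = 1 + si" using s1 by (simp add: algebra_simps)
    have e1': "si * (d * z) = z + si * z" for z using e1 by (metis distrib_right mult.assoc mult_1_left)
    have "(d - c) * si * (d - b) = ((d - 1) - (c - 1)) * si * (d - b)" by simp
    also have "\<dots> = (d - 1) * si * (d - b) - (c - 1) * si * (d - b)" by (simp add: algebra_simps)
    also have "\<dots> = (d - b) - (c - 1) * si * (d - b)" using s1 by simp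
    also have "\<dots> = W" unfolding W_def using e1 by (simp add: algebra_simps e1')
    finally show ?thesis .
  qed
  have qb: "qi * b * (b - 1) = b"
  proof -
    have "qi * b * (b - 1) = qi * (b - 1) * b" by (simp add: algebra_simps)
    then show ?thesis using q1 by simp
  qed
  have ii: "(d - c * ai * b) + (c - 1) * (si * d - ri * c * ai * (a - 1) * qi * b) * (b - 1) = W"
  proof -
    have "(c - 1) * (ri * c * ai * (a - 1) * qi * b) * (b - 1) = ((c - 1) * ri) * c * ai * (a - 1) * (qi * b * (b - 1))" by (simp add: mult.assoc)
    also have "\<dots> = c * ai * (a - 1) * b" using r1 qb by simp
    also have "\<dots> = c * b - c * ai * b" using a1 by (simp add: algebra_simps)
    finally have h: "(c - 1) * (ri * c * ai * (a - 1) * qi * b) * (b - 1) = c * b - c * ai * b" .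
    have "(d - c * ai * b) + (c - 1) * (si * d - ri * c * ai * (a - 1) * qi * b) * (b - 1)
        = d - c * ai * b + (c - 1) * si * d * (b - 1) - (c - 1) * (ri * c * ai * (a - 1) * qi * b) * (b - 1)"
      by (simp add: algebra_simps)
    also have "\<dots> = W" unfolding h W_def by (simp add: algebra_simps)
    finally show ?thesis .
  qed
  define T where "T = (c - 1) * (si * d - ri * c * ai * (a - 1) * qi * b) * (b - 1)"
  have T: "T = W - (d - c * ai * b)" using ii unfolding T_def[symmetric] by (simp add: eq_diff_eq add.commute)
  have "dci * (c - 1) * (si * d - ri * c * ai * (a - 1) * qi * b) * (b - 1) * dbi * (d - 1) = dci * T * dbi * (d - 1)"
    unfolding T_def by (simp only: mult.assoc)
  also have "\<dots> = dci * W * dbi * (d - 1) - dci * (d - c * ai * b) * dbi * (d - 1)"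
    unfolding T by (simp add: algebra_simps)
  also have "dci * W * dbi * (d - 1) = 1"
  proof -
    have "dci * W * dbi * (d - 1) = (dci * (d - c)) * si * ((d - b) * dbi) * (d - 1)" unfolding i[symmetric] by (simp add: mult.assoc)
    also have "\<dots> = 1" using dc db s1 by simp
    finally show ?thesis .
  qed
  finally show ?thesis by simp
qed

lemma z0_factor_cancellation:
  fixes a b c d ai si qi pi :: "'a::ring_1"
  assumes a1: "ai * a = 1" and s1: "(d - 1) * si = 1" "si * (d - 1) = 1"
    and q1: "qi * (b - 1) = 1" and p1: "(a - 1) * pi = 1"
  shows "c * ai * (a - 1) * (qi - pi) + (c - 1) * si * d - c * ai * (a - 1) * qi * b + (d - c) * si = 0"
proof -
  have e1: "(d - c) * si + (c - 1) * si * d = c"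
  proof -
    have "(d - c) * si + (c - 1) * si * d = ((d - 1) - (c - 1)) * si + (c - 1) * si * ((d - 1) + 1)" by simp
    also have "\<dots> = (d - 1) * si + (c - 1) * (si * (d - 1))" by (simp add: algebra_simps)
    also have "\<dots> = c" using s1 by simp
    finally show ?thesis .
  qed
  have e2: "ai * (a - 1) * qi * b = ai * (a - 1) * qi + ai * (a - 1)"
  proof -
    have "ai * (a - 1) * qi * b = ai * (a - 1) * qi * ((b - 1) + 1)" by simp
    also have "\<dots> = ai * (a - 1) * (qi * (b - 1)) + ai * (a - 1) * qi" by (simp only: mult.assoc distrib_left mult_1_right)
    finally show ?thesis using q1 by (simp add: add.commute)
  qed
  have e3: "ai * (a - 1) * pi = ai" using p1 by (simp add: mult.assoc)
  have "c * ai * (a - 1) * (qi - pi) + (c - 1) * si * d - c * ai * (a - 1) * qi * b + (d - c) * si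
      = c * (ai * (a - 1) * qi - ai * (a - 1) * pi) + ((d - c) * si + (c - 1) * si * d) - c * (ai * (a - 1) * qi * b)"
    by (simp add: algebra_simps)
  also have "\<dots> = c * (ai * (a - 1) * qi - ai) + c - c * (ai * (a - 1) * qi + ai * (a - 1))"
    unfolding e1 e2 e3 by simp
  also have "\<dots> = c * (1 - ai * a)" by (simp add: algebra_simps)
  also have "\<dots> = 0" using a1 by simp
  finally show ?thesis .
qed

lemma z0_difference_product:
  fixes a b c d ai si ri qi pi dci bai :: "'a::ring_1"
  assumes a1: "a * ai = 1" "ai * a = 1" and s1: "(d - 1) * si = 1" "si * (d - 1) = 1"
    and r1: "(c - 1) * ri = 1" and q1: "(b - 1) * qi = 1" "qi * (b - 1) = 1"
    and p1: "(a - 1) * pi = 1" and dc: "dci * (d - c) = 1" and ba: "bai * (b - a) = 1"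
  shows "(dci * c - bai * a) * ai * (a - 1) * (qi - pi)
    = si * (d - b) * qi - dci * (c - 1) * (si * d - ri * c * ai * (a - 1) * qi * b)"
proof -
  have Y: "(dci * c - bai * a) * ai * (a - 1) * (qi - pi) = dci * c * ai * (a - 1) * (qi - pi) + qi"
  proof -
    have "bai * a * ai * (a - 1) * (qi - pi) = bai * ((a - 1) * qi - (a - 1) * pi)"
      using a1 by (simp add: algebra_simps)
    also have "\<dots> = bai * ((a - 1) * qi - (b - 1) * qi)" using p1 q1 by simp
    also have "\<dots> = - ((bai * (b - a)) * qi)" by (simp add: algebra_simps)
    also have "\<dots> = - qi" using ba by simp
    finally have "bai * a * ai * (a - 1) * (qi - pi) = - qi" .
    then show ?thesis by (simp add: algebra_simps)
  qed
  define E where "E = c * ai * (a - 1) * (qi - pi) + (c - 1) * si * d - c * ai * (a - 1) * qi * b"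
  have "dci * E + si = dci * (E + (d - c) * si)"
    using dc by (simp add: distrib_left mult.assoc[symmetric])
  then have E1: "dci * E + si = 0"
    using z0_factor_cancellation[OF a1(2) s1 q1(2) p1] unfolding E_def by simp
  have x: "si * (d - b) * qi = qi - si"
  proof -
    have "si * (d - b) * qi = si * ((d - 1) - (b - 1)) * qi" by simp
    also have "\<dots> = (si * (d - 1)) * qi - si * ((b - 1) * qi)" by (simp add: algebra_simps)
    also have "\<dots> = qi - si" using s1 q1 by simp
    finally show ?thesis .
  qed
  have "dci * (c - 1) * (ri * c * ai * (a - 1) * qi * b) = dci * ((c - 1) * ri) * c * ai * (a - 1) * qi * b"
    by (simp add: mult.assoc)
  also have "\<dots> = dci * c * ai * (a - 1) * qi * b" by (simp only: r1 mult_1_right)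
  finally have "dci * (c - 1) * (ri * c * ai * (a - 1) * qi * b) = dci * c * ai * (a - 1) * qi * b" .
  then have y: "dci * (c - 1) * (si * d - ri * c * ai * (a - 1) * qi * b)
      = dci * (c - 1) * si * d - dci * c * ai * (a - 1) * qi * b"
    using right_diff_distrib[of "dci * (c - 1)" "si * d" "ri * c * ai * (a - 1) * qi * b"]
    by (simp add: mult.assoc)
  have "dci * c * ai * (a - 1) * (qi - pi) + qi
      - ((qi - si) - (dci * (c - 1) * si * d - dci * c * ai * (a - 1) * qi * b)) = dci * E + si"
    unfolding E_def by (simp add: algebra_simps)
  then show ?thesis unfolding Y x y E1 by simp
qed

lemma z0_factor_identity:
  fixes a b c d ai si ri qi pi dci dbi bai :: "'a::ring_1"
  assumes a1: "a * ai = 1" "ai * a = 1" and s1: "(d - 1) * si = 1" "si * (d - 1) = 1"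
    and r1: "(c - 1) * ri = 1" and q1: "(b - 1) * qi = 1" "qi * (b - 1) = 1"
    and p1: "(a - 1) * pi = 1" and dc: "dci * (d - c) = 1" and db: "dbi * (d - b) = 1"
    and ba: "bai * (b - a) = 1"
  shows "(b - 1) * dbi * (d - 1) * (dci * c - bai * a) * ai * (a - 1) * (qi - pi)
       = 1 - (b - 1) * dbi * (d - 1) * dci * (c - 1) * (si * d - ri * c * ai * (a - 1) * qi * b)"
proof -
  have "(b - 1) * dbi * (d - 1) * (dci * c - bai * a) * ai * (a - 1) * (qi - pi)
     = (b - 1) * dbi * (d - 1) * ((dci * c - bai * a) * ai * (a - 1) * (qi - pi))" by (simp add: mult.assoc)
  also have "\<dots> = (b - 1) * dbi * ((d - 1) * si) * (d - b) * qi
      - (b - 1) * dbi * (d - 1) * dci * (c - 1) * (si * d - ri * c * ai * (a - 1) * qi * b)"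
    unfolding z0_difference_product[OF a1 s1 r1 q1 p1 dc ba] by (simp add: algebra_simps)
  also have "(b - 1) * dbi * ((d - 1) * si) * (d - b) * qi = 1"
  proof -
    have "(b - 1) * dbi * ((d - 1) * si) * (d - b) * qi = (b - 1) * (dbi * (d - b)) * qi"
      using s1 by (simp add: mult.assoc)
    then show ?thesis using db q1 by simp
  qed
  finally show ?thesis .
qed

lemma X_paper_form:
  fixes a b c d :: "'a::ring_1"
  assumes ub: "is_unit b" and udb: "is_unit (d - b)"
  shows "rinv (d - c) * (d * rinv b - c * rinv a) * rinv (d * rinv b - 1) * (d - 1)
       = rinv (d - c) * (d - c * rinv a * b) * rinv (d - b) * (d - 1)"
proof -
  have b1: "b * rinv b = 1" "rinv b * b = 1" using right_rinv[OF ub] left_rinv[OF ub] by auto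
  have db1: "(d - b) * rinv (d - b) = 1" "rinv (d - b) * (d - b) = 1" using right_rinv[OF udb] left_rinv[OF udb] by auto
  have e: "d * rinv b - 1 = (d - b) * rinv b" using b1 by (simp add: algebra_simps)
  have r: "rinv (d * rinv b - 1) = b * rinv (d - b)"
  proof (rule rinv_eqI)
    show "(d * rinv b - 1) * (b * rinv (d - b)) = 1" unfolding e
      using b1 db1 by (simp add: mult.assoc right_rinv_cancel[OF ub] left_rinv_cancel[OF ub])
    show "b * rinv (d - b) * (d * rinv b - 1) = 1" unfolding e
      using b1 db1 by (simp add: mult.assoc right_rinv_cancel[OF udb] left_rinv_cancel[OF udb])
  qed
  have "(d * rinv b - c * rinv a) * (b * rinv (d - b)) = (d - c * rinv a * b) * rinv (d - b)"
    using b1 by (simp add: algebra_simps right_rinv_cancel[OF ub] left_rinv_cancel[OF ub])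
  then show ?thesis unfolding r by (simp add: mult.assoc)
qed

lemma one_minus_mult_commute:
  fixes x u v w :: "'a::ring_1"
  assumes "1 - x = u * v" and "v * w = 1 - v * u"
  shows "(1 - x) * w = x * u"
proof -
  have "(1 - x) * w = u * (v * w)" unfolding assms(1) by (simp add: mult.assoc)
  also have "\<dots> = u - (u * v) * u" unfolding assms(2) by (simp add: algebra_simps)
  also have "\<dots> = x * u" unfolding assms(1)[symmetric] by (simp add: algebra_simps)
  finally show ?thesis .
qed

lemma second_level_identity:
  fixes a b c d b0 :: "'a::ring_1"
  defines "\<zeta> \<equiv> rinv (d - c) * (c - 1) - rinv (b - a) * (a - 1)"
    and "X \<equiv> rinv (d - c) * (d - c * rinv a * b) * rinv (d - b) * (d - 1)"
    and "\<sigma> \<equiv> rinv (d - 1) * d - rinv (c - 1) * c * rinv a * (a - 1) * rinv (b - 1) * b"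
  assumes ua: "is_unit a" and ua1: "is_unit (a - 1)" and ub1: "is_unit (b - 1)"
    and uc1: "is_unit (c - 1)" and ud1: "is_unit (d - 1)" and udb: "is_unit (d - b)"
    and udc: "is_unit (d - c)" and uba: "is_unit (b - a)" and u\<zeta>: "is_unit \<zeta>" and u\<sigma>: "is_unit \<sigma>"
    and \<zeta>b0: "\<zeta> * b0 = rinv (d - c) * c - rinv (b - a) * a"
  shows "rinv \<zeta> * X * \<zeta> * (1 - b0 * rinv a * (a - 1))
    = (1 - rinv \<zeta> * X * \<zeta>) * - (b0 * rinv a * (a - 1) * (rinv (b - 1) - rinv (a - 1)) * rinv \<sigma>
        * (rinv (c - 1) - rinv (a - 1)) * rinv a * (a - 1))"
proof -
  define ai pi qi ri si dci dbi bai where "ai = rinv a" "pi = rinv (a - 1)" "qi = rinv (b - 1)"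
    "ri = rinv (c - 1)" "si = rinv (d - 1)" "dci = rinv (d - c)" "dbi = rinv (d - b)" "bai = rinv (b - a)"
  note defs = ai_pi_qi_ri_si_dci_dbi_bai_def
  have ia: "a * ai = 1" "ai * a = 1" and ip: "(a - 1) * pi = 1" "pi * (a - 1) = 1"
    and iq: "(b - 1) * qi = 1" "qi * (b - 1) = 1" and ir: "(c - 1) * ri = 1" "ri * (c - 1) = 1"
    and isd: "(d - 1) * si = 1" "si * (d - 1) = 1" and idc: "(d - c) * dci = 1" "dci * (d - c) = 1"
    and idb: "(d - b) * dbi = 1" "dbi * (d - b) = 1" and iba: "bai * (b - a) = 1"
    and i\<sigma>: "\<sigma> * rinv \<sigma> = 1" "rinv \<sigma> * \<sigma> = 1" and i\<zeta>: "\<zeta> * rinv \<zeta> = 1" "rinv \<zeta> * \<zeta> = 1"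
    using assms by (simp_all add: defs right_rinv left_rinv)
  define z0 where "z0 = dci * c - bai * a"
  define t where "t = rinv \<zeta> * X * \<zeta>"
  have \<zeta>b0': "\<zeta> * b0 = z0" using \<zeta>b0 unfolding z0_def defs .
  have K: "\<zeta> - z0 * ai * (a - 1) = dci * (c - a) * ai"
  proof -
    have r: "ai * (a * z) = z" "a * (ai * z) = z" for z
      using ia by (simp_all add: mult.assoc[symmetric])
    show ?thesis unfolding \<zeta>_def z0_def defs[symmetric] by (simp add: algebra_simps ia r)
  qed
  have "t * (1 - b0 * ai * (a - 1)) = rinv \<zeta> * X * (\<zeta> - (\<zeta> * b0) * ai * (a - 1))"
    unfolding t_def by (simp add: algebra_simps)
  also have "\<dots> = rinv \<zeta> * X * (dci * (c - a) * ai)" unfolding \<zeta>b0' K ..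
  finally have L: "t * (1 - b0 * ai * (a - 1)) = rinv \<zeta> * X * (dci * (c - a) * ai)" .
  have "1 - X = (dci * (c - 1) * \<sigma>) * ((b - 1) * dbi * (d - 1))"
    using one_minus_X_factor[OF ia isd ir(1) iq idc(2) idb(1)]
    unfolding X_def \<sigma>_def defs[symmetric] by (simp add: mult.assoc)
  moreover have "((b - 1) * dbi * (d - 1)) * (z0 * ai * (a - 1) * (qi - pi))
      = 1 - ((b - 1) * dbi * (d - 1)) * (dci * (c - 1) * \<sigma>)"
    using z0_factor_identity[OF ia isd ir(1) iq ip(1) idc(2) idb(2) iba]
    unfolding z0_def \<sigma>_def defs[symmetric] by (simp add: mult.assoc)
  ultimately have X: "(1 - X) * (z0 * ai * (a - 1) * (qi - pi)) = X * (dci * (c - 1) * \<sigma>)"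
    by (rule one_minus_mult_commute)
  have "1 - t = rinv \<zeta> * (1 - X) * \<zeta>" unfolding t_def using i\<zeta> by (simp add: algebra_simps)
  then have "(1 - t) * - (b0 * ai * (a - 1) * (qi - pi) * rinv \<sigma> * (ri - pi) * ai * (a - 1))
      = - (rinv \<zeta> * ((1 - X) * (z0 * ai * (a - 1) * (qi - pi))) * rinv \<sigma> * (ri - pi) * ai * (a - 1))"
    unfolding \<zeta>b0'[symmetric] by (simp add: mult.assoc)
  also have "\<dots> = - (rinv \<zeta> * X * dci * ((c - 1) * (\<sigma> * rinv \<sigma>) * (ri - pi) * ai * (a - 1)))"
    unfolding X by (simp add: mult.assoc)
  also have "\<dots> = - (rinv \<zeta> * X * dci * ((a - c) * ai))"
    unfolding i\<sigma> difference_of_inverses_identity[OF ia ip ir, symmetric] by (simp add: mult.assoc)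
  also have "\<dots> = rinv \<zeta> * X * (dci * (c - a) * ai)" by (simp add: algebra_simps)
  finally show ?thesis using L unfolding t_def defs by simp
qed

lemma Phi_hat_11:
  fixes M :: "nat \<Rightarrow> nat \<Rightarrow> 'a::ring_1" and s \<tau> :: 'a
  assumes hat: "M \<in> Mhat3" and s_def: "s = rinv (M 2 2 - 1)"
    and \<tau>_def: "\<tau> = (M 1 1 - 1) - (M 1 2 - 1) * s * (M 2 1 - 1)"
  defines "q \<equiv> s * (M 2 2 - M 2 1) * rinv \<tau> * (M 2 2 - M 1 2) * s"
  assumes u: "is_unit (M 2 2 - 1)" "is_unit (M 2 2 - M 1 2)" "is_unit (M 2 2 - M 2 1)" "is_unit \<tau>"
      "is_unit (q + s * M 2 2)"
  shows "Phi M 1 1 = q * rinv (q + s * M 2 2)"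
proof -
  have "minvertible 2 (\<lambda>i j. M (Suc i) (Suc j) - 1)"
    by (rule minvertible_2_of_schur) (use u in \<open>simp_all add: numeral_2_eq_2 s_def \<tau>_def\<close>)
  then have N: "is_minv 3 M (minv 3 M)" using minvertible_hat_iff[OF hat] is_minv_minv by blast
  note N11 = hat_minv_11[OF hat N refl refl refl refl u(1)]
  note B = hat_minv_block[OF hat N refl refl refl refl u(1), folded s_def]
  note Q = hat_minv_quasidet[OF hat N u(1-3), folded s_def]
  have "rinv (minv 3 M 1 1) = \<tau>" using N11(4) unfolding \<tau>_def s_def .
  then have "minv 3 M 1 1 = rinv \<tau>" using rinv_rinv[OF N11(3)] by simp
  then have N00: "minv 3 M 0 0 = q + s * M 2 2" unfolding B(3) q_def by (simp add: add.commute)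
  have "Phi M 1 1 = (minv 3 M 0 0 - s * M 2 2) * rinv (minv 3 M 0 0)"
    using Phi_eq[of M 1 1] Q u(5) unfolding N00[symmetric] by simp
  then show ?thesis unfolding N00 by simp
qed

lemma second_level_entries:
  fixes H :: "nat \<Rightarrow> nat \<Rightarrow> 'a::ring_1" and a b c d b0 :: 'a
  defines "k \<equiv> rinv b0"
  assumes H: "H 1 1 = 1 - rinv (d - 1) * d * k" "H 1 2 = 1 - rinv (c - 1) * c * k"
      "H 2 1 = 1 - rinv (b - 1) * b * k" "H 2 2 = 1 - rinv (a - 1) * a * k"
    and u: "is_unit a" "is_unit (a - 1)" "is_unit (b - 1)" "is_unit (c - 1)"
      "is_unit (b - a)" "is_unit (c - a)" "is_unit b0"
  shows "rinv (H 2 2 - 1) = - (b0 * rinv a * (a - 1))"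
    and "(H 1 1 - 1) - (H 1 2 - 1) * rinv (H 2 2 - 1) * (H 2 1 - 1)
      = - ((rinv (d - 1) * d - rinv (c - 1) * c * rinv a * (a - 1) * rinv (b - 1) * b) * k)"
    and "H 2 2 - H 2 1 = (rinv (b - 1) - rinv (a - 1)) * k"
    and "H 2 2 - H 1 2 = (rinv (c - 1) - rinv (a - 1)) * k"
    and "is_unit (H 2 2 - 1)" and "is_unit (H 2 2 - H 2 1)" and "is_unit (H 2 2 - H 1 2)"
proof -
  define ai pi qi ri where "ai = rinv a" "pi = rinv (a - 1)" "qi = rinv (b - 1)" "ri = rinv (c - 1)"
  note defs = ai_pi_qi_ri_def
  have ip: "(a - 1) * pi = 1" "pi * (a - 1) = 1" and iq: "(b - 1) * qi = 1" "qi * (b - 1) = 1"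
    and ir: "(c - 1) * ri = 1" "ri * (c - 1) = 1" and ik: "b0 * k = 1" "k * b0 = 1"
    using u by (simp_all add: defs k_def right_rinv left_rinv)
  have uk: "is_unit k" "rinv k = b0" using u(7) by (simp_all add: k_def is_unit_rinv rinv_rinv)
  have \<delta>1: "H 2 2 - 1 = - (pi * a * k)" unfolding H defs by simp
  show "is_unit (H 2 2 - 1)" unfolding \<delta>1 using u uk(1)
    by (simp add: defs is_unit_mult is_unit_rinv is_unit_uminus)
  show s: "rinv (H 2 2 - 1) = - (b0 * rinv a * (a - 1))"
    unfolding \<delta>1 using u uk
    by (simp add: defs is_unit_mult is_unit_rinv rinv_uminus rinv_mult rinv_rinv mult.assoc)
  have kb: "k * (b0 * z) = z" for z using ik by (simp add: mult.assoc[symmetric])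
  show "(H 1 1 - 1) - (H 1 2 - 1) * rinv (H 2 2 - 1) * (H 2 1 - 1)
      = - ((rinv (d - 1) * d - rinv (c - 1) * c * rinv a * (a - 1) * rinv (b - 1) * b) * k)"
    unfolding s unfolding H by (simp add: algebra_simps kb)
  have "pi * a = 1 + pi" "qi * b = 1 + qi" "ri * c = 1 + ri"
    using ip iq ir by (simp_all add: algebra_simps)
  then show \<delta>\<gamma>: "H 2 2 - H 2 1 = (rinv (b - 1) - rinv (a - 1)) * k"
    and \<delta>\<beta>: "H 2 2 - H 1 2 = (rinv (c - 1) - rinv (a - 1)) * k"
    unfolding H defs[symmetric] by (simp_all add: algebra_simps)
  have "qi - pi = qi * ((a - 1) * pi) - (qi * (b - 1)) * pi"
    "ri - pi = ri * ((a - 1) * pi) - (ri * (c - 1)) * pi"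
    using ip iq ir by simp_all
  then have "qi - pi = qi * (a - b) * pi" "ri - pi = ri * (a - c) * pi"
    by (simp_all add: algebra_simps)
  then show "is_unit (H 2 2 - H 2 1)" "is_unit (H 2 2 - H 1 2)"
    unfolding \<delta>\<gamma> \<delta>\<beta> defs[symmetric] using u uk(1)
    by (simp_all add: defs is_unit_mult is_unit_rinv is_unit_minus_commute)
qed

lemma Phi_second_level:
  fixes H :: "nat \<Rightarrow> nat \<Rightarrow> 'a::ring_1" and a b c d b0 :: 'a
  defines "\<zeta> \<equiv> rinv (d - c) * (c - 1) - rinv (b - a) * (a - 1)"
    and "X \<equiv> rinv (d - c) * (d - c * rinv a * b) * rinv (d - b) * (d - 1)"
    and "\<sigma> \<equiv> rinv (d - 1) * d - rinv (c - 1) * c * rinv a * (a - 1) * rinv (b - 1) * b"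
    and "k \<equiv> rinv b0"
  assumes hat: "H \<in> Mhat3"
    and H: "H 1 1 = 1 - rinv (d - 1) * d * k" "H 1 2 = 1 - rinv (c - 1) * c * k"
      "H 2 1 = 1 - rinv (b - 1) * b * k" "H 2 2 = 1 - rinv (a - 1) * a * k"
    and u: "is_unit a" "is_unit (a - 1)" "is_unit (b - 1)" "is_unit (c - 1)" "is_unit (d - 1)"
      "is_unit (b - a)" "is_unit (c - a)" "is_unit (d - b)" "is_unit (d - c)"
      "is_unit (d - c * rinv a * b)" "is_unit b0" "is_unit \<zeta>" "is_unit \<sigma>"
    and \<zeta>b0: "\<zeta> * b0 = rinv (d - c) * c - rinv (b - a) * a"
  shows "Phi H 1 1 = rinv \<zeta> * X * \<zeta>"
proof -
  note E = second_level_entries[OF H[unfolded k_def] u(1-4,6,7,11), folded k_def \<sigma>_def]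
  have uk: "is_unit k" "rinv k = b0" using u(11) by (simp_all add: k_def is_unit_rinv rinv_rinv)
  define s q where "s = rinv (H 2 2 - 1)"
    and "q = s * (H 2 2 - H 2 1) * rinv (- (\<sigma> * k)) * (H 2 2 - H 1 2) * s"
  have q: "q = - (b0 * rinv a * (a - 1) * (rinv (b - 1) - rinv (a - 1)) * rinv \<sigma>
      * (rinv (c - 1) - rinv (a - 1)) * rinv a * (a - 1))"
    unfolding q_def s_def E(1,3,4) using u(11,13) uk
    by (simp add: is_unit_mult rinv_uminus rinv_mult mult.assoc left_rinv_cancel[OF u(11), folded k_def])
  have uq: "is_unit q" unfolding q_def s_def using E(5-7) u(13) uk(1)
    by (simp add: is_unit_mult is_unit_uminus is_unit_rinv)
  have "s * H 2 2 = s * (H 2 2 - 1) + s" by (simp add: algebra_simps)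
  then have s\<delta>: "s * H 2 2 = 1 - b0 * rinv a * (a - 1)"
    using left_rinv[OF E(5)] unfolding s_def E(1) by simp
  define t where "t = rinv \<zeta> * X * \<zeta>"
  have ut: "is_unit t" unfolding t_def X_def using u by (simp add: is_unit_mult is_unit_rinv)
  have "t * (1 - b0 * rinv a * (a - 1)) = (1 - t) * q"
    unfolding t_def q \<zeta>_def X_def \<sigma>_def
    by (rule second_level_identity) (use u \<zeta>b0 in \<open>simp_all add: \<zeta>_def \<sigma>_def\<close>)
  then have tq: "t * (q + s * H 2 2) = q" unfolding s\<delta> by (simp add: algebra_simps)
  then have "q + s * H 2 2 = rinv t * q" using ut by (simp add: unit_mult_left_eq_iff)
  then have uqs: "is_unit (q + s * H 2 2)" using ut uq by (simp add: is_unit_mult is_unit_rinv)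
  have u\<tau>: "is_unit (- (\<sigma> * k))" using u(13) uk(1) by (simp add: is_unit_mult is_unit_uminus)
  have "Phi H 1 1 = q * rinv (q + s * H 2 2)"
    using Phi_hat_11[OF hat s_def E(2)[folded s_def, symmetric] E(5,7,6) u\<tau> uqs[unfolded q_def]]
    unfolding q_def .
  also have "\<dots> = t * (q + s * H 2 2) * rinv (q + s * H 2 2)" unfolding tq ..
  also have "\<dots> = t" using uqs by (simp add: mult.assoc right_rinv)
  finally show ?thesis unfolding t_def .
qed

theorem lemma12:
  fixes A :: "nat \<Rightarrow> nat \<Rightarrow> 'a::ring_1" and a b c d :: 'a
  assumes "A \<in> Shat3"
    and "A 1 1 = a" and "A 1 2 = b" and "A 2 1 = c" and "A 2 2 = d"
  shows "let \<zeta> = rinv (d - c) * (c - 1) - rinv (b - a) * (a - 1)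
         in Phi (Phi A) 1 1
            = rinv \<zeta> * rinv (d - c) * (d * rinv b - c * rinv a) * rinv (d * rinv b - 1) * (d - 1) * \<zeta>"
proof -
  note u = Shat3_units[OF assms] and z = Shat3_zeta[OF assms] and P = Phi_Shat3[OF assms]
  have "Phi (Phi A) 1 1 = rinv (rinv (d - c) * (c - 1) - rinv (b - a) * (a - 1))
      * (rinv (d - c) * (d - c * rinv a * b) * rinv (d - b) * (d - 1))
      * (rinv (d - c) * (c - 1) - rinv (b - a) * (a - 1))"
    by (rule Phi_second_level[OF P])
      (use u z Shat3_J2_schur_unit[OF assms] in \<open>simp_all add: is_unit_minus_commute\<close>)
  then show ?thesis
    unfolding Let_def X_paper_form[OF u(2,11), symmetric] by (simp add: mult.assoc)
qed

end
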